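(* Let $\mathbf{u}=(u_1,u_2)\in\mathbb{R}[x_1,x_2]_d^2$ and $p\in\Sigma[x_1,x_2]_{2d}$, and suppose $\nabla f_p(\mathbf{u})=0$. If $p\in\operatorname{im}(\mathcal{A}_{\mathbf{u}})$, where $\mathcal{A}_{\mathbf{u}}:\mathbb{R}[x_1,x_2]_d^2\to\mathbb{R}[x_1,x_2]_{2d}$, $(v_1,v_2)\mapsto u_1v_1+u_2v_2$, then $f_p(\mathbf{u})=0$.
   Context: $\mathbb{R}[x_1,x_2]_n$ denotes the space of real binary forms (homogeneous polynomials in $x_1,x_2$) of degree $n$, and $\Sigma[x_1,x_2]_{2d}\subseteq\mathbb{R}[x_1,x_2]_{2d}$ the cone of sums of squares of binary forms of degree $d$. Fix any inner product $\langle\cdot,\cdot\rangle$ on $\mathbb{R}[x_1,x_2]_{2d}$ with induced norm $\|\cdot\|$, and let $f_p(\mathbf{u})=\|u_1^2+u_2^2-p\|^2$ for $\mathbf{u}\in\mathbb{R}[x_1,x_2]_d^2$. The gradient is taken with respect to the finite-dimensional real vector space $\mathbb{R}[x_1,x_2]_d^2$; $\nabla f_p(\mathbf{u})=0$ is equivalent to $\langle u_1v_1+u_2v_2,\,u_1^2+u_2^2-p\rangle=0$ for all $(v_1,v_2)\in\mathbb{R}[x_1,x_2]_d^2$. *)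

theory Defs
  imports "HOL-Analysis.Analysis" "HOL-Computational_Algebra.Polynomial"
begin

text \<open>A real binary form of degree n, a_0 x2^n + a_1 x1 x2^(n-1) + ... + a_n x1^n, is encoded
  by the univariate polynomial a_0 + a_1 X + ... + a_n X^n of degree at most n
  (dehomogenisation x2 = 1).  This is a linear isomorphism, and multiplication of forms
  of degrees m and n corresponds to multiplication of polynomials.\<close>

definition bforms :: "nat \<Rightarrow> real poly set" where
  "bforms n = {q. degree q \<le> n}"

definition sos_forms :: "nat \<Rightarrow> real poly set" where
  "sos_forms d = {p. \<exists>qs. (\<forall>q\<in>set qs. q \<in> bforms d) \<and> p = sum_list (map (\<lambda>q. q ^ 2) qs)}"

definition is_inner_product :: "nat \<Rightarrow> (real poly \<Rightarrow> real poly \<Rightarrow> real) \<Rightarrow> bool" where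
  "is_inner_product n ip \<longleftrightarrow>
     (\<forall>p\<in>bforms n. \<forall>q\<in>bforms n. ip p q = ip q p) \<and>
     (\<forall>a b. \<forall>p\<in>bforms n. \<forall>q\<in>bforms n. \<forall>r\<in>bforms n.
         ip (smult a p + smult b q) r = a * ip p r + b * ip q r) \<and>
     (\<forall>p\<in>bforms n. p \<noteq> 0 \<longrightarrow> ip p p > 0)"

definition ip_norm :: "(real poly \<Rightarrow> real poly \<Rightarrow> real) \<Rightarrow> real poly \<Rightarrow> real" where
  "ip_norm ip q = sqrt (ip q q)"

definition fp :: "(real poly \<Rightarrow> real poly \<Rightarrow> real) \<Rightarrow> real poly \<Rightarrow> real poly \<Rightarrow> real poly \<Rightarrow> real" where
  "fp ip p u1 u2 = (ip_norm ip (u1 ^ 2 + u2 ^ 2 - p)) ^ 2"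

definition grad_zero :: "nat \<Rightarrow> (real poly \<Rightarrow> real poly \<Rightarrow> real) \<Rightarrow> real poly \<Rightarrow> real poly \<Rightarrow> real poly \<Rightarrow> bool" where
  "grad_zero d ip p u1 u2 \<longleftrightarrow>
     (\<forall>v1\<in>bforms d. \<forall>v2\<in>bforms d.
        ((\<lambda>t. fp ip p (u1 + smult t v1) (u2 + smult t v2)) has_real_derivative 0) (at 0))"

end

theory Submission
  imports Defs
begin

text \<open>Let r = u1^2 + u2^2 - p be the residual.  Differentiating f_p along the line u + t v gives
  4 \<langle>u1 v1 + u2 v2, r\<rangle>, so a critical point has its residual orthogonal to the image of A_u.
  If p = u1 w1 + u2 w2 lies in that image, then r = u1 (u1 - w1) + u2 (u2 - w2) lies there too,
  hence \<langle>r, r\<rangle> = 0 and f_p(u) = 0.\<close>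

lemma bforms_0 [simp]: "0 \<in> bforms n"
  by (simp add: bforms_def)

lemma bforms_add: "x \<in> bforms n \<Longrightarrow> y \<in> bforms n \<Longrightarrow> x + y \<in> bforms n"
  by (simp add: bforms_def degree_add_le)

lemma bforms_diff: "x \<in> bforms n \<Longrightarrow> y \<in> bforms n \<Longrightarrow> x - y \<in> bforms n"
  by (simp add: bforms_def degree_diff_le)

lemma bforms_smult: "x \<in> bforms n \<Longrightarrow> smult c x \<in> bforms n"
  by (simp add: bforms_def)

lemma bforms_mult: "x \<in> bforms m \<Longrightarrow> y \<in> bforms n \<Longrightarrow> x * y \<in> bforms (m + n)"
  unfolding bforms_def by (auto intro: order.trans[OF degree_mult_le])

lemma bforms_mult_double: "x \<in> bforms d \<Longrightarrow> y \<in> bforms d \<Longrightarrow> x * y \<in> bforms (2 * d)"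
  using bforms_mult[of x d y d] by (simp add: mult_2)

context
  fixes n :: nat and ip :: "real poly \<Rightarrow> real poly \<Rightarrow> real"
  assumes ip: "is_inner_product n ip"
begin

lemma ip_commute: "x \<in> bforms n \<Longrightarrow> y \<in> bforms n \<Longrightarrow> ip x y = ip y x"
  using ip by (simp add: is_inner_product_def)

lemma ip_smult_add_left:
  "x \<in> bforms n \<Longrightarrow> y \<in> bforms n \<Longrightarrow> z \<in> bforms n \<Longrightarrow>
    ip (smult a x + smult b y) z = a * ip x z + b * ip y z"
  using ip by (simp add: is_inner_product_def)

lemma ip_add_left: "x \<in> bforms n \<Longrightarrow> y \<in> bforms n \<Longrightarrow> z \<in> bforms n \<Longrightarrow>
    ip (x + y) z = ip x z + ip y z"
  using ip_smult_add_left[of x y z 1 1] by simp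

lemma ip_smult_left: "x \<in> bforms n \<Longrightarrow> z \<in> bforms n \<Longrightarrow> ip (smult a x) z = a * ip x z"
  using ip_smult_add_left[of x 0 z a 0] by simp

lemma ip_add_right: "x \<in> bforms n \<Longrightarrow> y \<in> bforms n \<Longrightarrow> z \<in> bforms n \<Longrightarrow>
    ip z (x + y) = ip z x + ip z y"
  by (simp add: ip_commute[of z] ip_add_left bforms_add)

lemma ip_smult_right: "x \<in> bforms n \<Longrightarrow> z \<in> bforms n \<Longrightarrow> ip z (smult a x) = a * ip z x"
  by (simp add: ip_commute[of z] ip_smult_left bforms_smult)

lemma ip_self_pos: "x \<in> bforms n \<Longrightarrow> x \<noteq> 0 \<Longrightarrow> ip x x > 0"
  using ip unfolding is_inner_product_def by blast

lemma ip_zero_zero: "ip 0 0 = 0"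
  using ip_smult_left[of 0 0 0] by simp

lemma ip_self_nonneg: "x \<in> bforms n \<Longrightarrow> ip x x \<ge> 0"
  using ip_self_pos[of x] ip_zero_zero by force

lemma ip_norm_power2: "x \<in> bforms n \<Longrightarrow> ip_norm ip x ^ 2 = ip x x"
  by (simp add: ip_norm_def ip_self_nonneg)

lemma ip_self_add_smult:
  assumes "x \<in> bforms n" "y \<in> bforms n"
  shows "ip (x + smult t y) (x + smult t y) = ip x x + 2 * t * ip x y + t\<^sup>2 * ip y y"
proof -
  have ty: "smult t y \<in> bforms n"
    using assms(2) by (rule bforms_smult)
  have "ip (x + smult t y) (x + smult t y)
      = ip x x + ip x (smult t y) + ip (smult t y) x + ip (smult t y) (smult t y)"
    using assms ty by (simp add: ip_add_left ip_add_right bforms_add)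
  also have "\<dots> = ip x x + 2 * t * ip x y + t\<^sup>2 * ip y y"
    using assms by (simp add: ip_smult_left ip_smult_right ip_commute[of y x] bforms_smult
        power2_eq_square)
  finally show ?thesis .
qed

lemma has_real_derivative_ip_self_quadratic_curve:
  assumes "x \<in> bforms n" "y \<in> bforms n" "z \<in> bforms n"
  shows "((\<lambda>t. ip (x + smult t (y + smult t z)) (x + smult t (y + smult t z)))
           has_real_derivative 2 * ip x y) (at 0)"
proof -
  have "ip (x + smult t (y + smult t z)) (x + smult t (y + smult t z))
      = ip x x + 2 * t * (ip x y + t * ip x z)
        + t\<^sup>2 * (ip y y + 2 * t * ip y z + t\<^sup>2 * ip z z)" for t
    using assms ip_self_add_smult[of x "y + smult t z" t] ip_self_add_smult[of y z t]
    by (simp add: bforms_add bforms_smult ip_add_right ip_smult_right)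
  then show ?thesis
    by (simp only:) (auto intro!: derivative_eq_intros)
qed

end

lemma residual_along_line:
  fixes u1 u2 v1 v2 p :: "'a :: comm_ring_1 poly"
  shows "(u1 + smult t v1)\<^sup>2 + (u2 + smult t v2)\<^sup>2 - p
       = (u1\<^sup>2 + u2\<^sup>2 - p) + smult t (2 * (u1 * v1 + u2 * v2) + smult t (v1\<^sup>2 + v2\<^sup>2))"
proof -
  have "(u1 + T * v1)\<^sup>2 + (u2 + T * v2)\<^sup>2 - p
      = (u1\<^sup>2 + u2\<^sup>2 - p) + T * (2 * (u1 * v1 + u2 * v2) + T * (v1\<^sup>2 + v2\<^sup>2))" for T
    by (simp add: algebra_simps power2_eq_square)
  from this[of "[:t:]"] show ?thesis
    by simp
qed

lemma grad_zero_imp_residual_orthogonal: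
  assumes ip: "is_inner_product (2 * d) ip"
    and u: "u1 \<in> bforms d" "u2 \<in> bforms d" and v: "v1 \<in> bforms d" "v2 \<in> bforms d"
    and p: "p \<in> bforms (2 * d)"
    and crit: "grad_zero d ip p u1 u2"
  shows "ip (u1\<^sup>2 + u2\<^sup>2 - p) (u1 * v1 + u2 * v2) = 0"
proof -
  define r where "r = u1\<^sup>2 + u2\<^sup>2 - p"
  define a where "a = 2 * (u1 * v1 + u2 * v2)"
  define b where "b = v1\<^sup>2 + v2\<^sup>2"
  have uv: "u1 * v1 + u2 * v2 \<in> bforms (2 * d)"
    using u v by (simp add: bforms_add bforms_mult_double)
  have r: "r \<in> bforms (2 * d)"
    unfolding r_def power2_eq_square using u p
    by (simp add: bforms_add bforms_diff bforms_mult_double)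
  have a: "a \<in> bforms (2 * d)"
    unfolding a_def mult_2[of "u1 * v1 + u2 * v2"] using uv uv by (rule bforms_add)
  have b: "b \<in> bforms (2 * d)"
    unfolding b_def power2_eq_square using v by (simp add: bforms_add bforms_mult_double)
  have "fp ip p (u1 + smult t v1) (u2 + smult t v2)
      = ip (r + smult t (a + smult t b)) (r + smult t (a + smult t b))" for t
    unfolding fp_def residual_along_line r_def[symmetric] a_def[symmetric] b_def[symmetric]
    using r a b by (simp add: ip_norm_power2[OF ip] bforms_add bforms_smult)
  then have "((\<lambda>t. fp ip p (u1 + smult t v1) (u2 + smult t v2))
      has_real_derivative 2 * ip r a) (at 0)"
    using has_real_derivative_ip_self_quadratic_curve[OF ip r a b] by simp
  moreover have "((\<lambda>t. fp ip p (u1 + smult t v1) (u2 + smult t v2))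
      has_real_derivative 0) (at 0)"
    using crit v unfolding grad_zero_def by blast
  ultimately have "2 * ip r a = 0"
    by (rule DERIV_unique)
  then show ?thesis
    unfolding a_def mult_2[of "u1 * v1 + u2 * v2"] r_def[symmetric]
    using ip_add_right[OF ip uv uv r] by simp
qed

theorem proposition4p1:
  fixes d :: nat and ip :: "real poly \<Rightarrow> real poly \<Rightarrow> real" and u1 u2 p :: "real poly"
  assumes "is_inner_product (2 * d) ip"
    and "u1 \<in> bforms d" and "u2 \<in> bforms d"
    and "p \<in> sos_forms d"
    and "grad_zero d ip p u1 u2"
    and "\<exists>v1\<in>bforms d. \<exists>v2\<in>bforms d. p = u1 * v1 + u2 * v2"
  shows "fp ip p u1 u2 = 0"
proof -
  obtain w1 w2 where w: "w1 \<in> bforms d" "w2 \<in> bforms d" and p: "p = u1 * w1 + u2 * w2"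
    using assms(6) by blast
  define r where "r = u1\<^sup>2 + u2\<^sup>2 - p"
  have r_image: "r = u1 * (u1 - w1) + u2 * (u2 - w2)"
    unfolding r_def p by (simp add: algebra_simps power2_eq_square)
  have r: "r \<in> bforms (2 * d)"
    unfolding r_image using assms(2,3) w by (simp add: bforms_add bforms_diff bforms_mult_double)
  have "p \<in> bforms (2 * d)"
    unfolding p using assms(2,3) w by (simp add: bforms_add bforms_mult_double)
  then have "ip r r = 0"
    using grad_zero_imp_residual_orthogonal[OF assms(1-3) _ _ _ assms(5), of "u1 - w1" "u2 - w2"]
      assms(2,3) w
    unfolding r_image[symmetric] r_def[symmetric] by (simp add: bforms_diff)
  then show ?thesis
    unfolding fp_def r_def[symmetric] by (simp add: ip_norm_power2[OF assms(1) r])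
qed

end
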